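(* For every integer $n\ge 1$, the functions of $r\in\mathbb N$ given by $\sum_{i=0}^{w_{n-1}(r)}|\varphi^i(\xi)|$, by $w_n(r)$, and by $\exp^n(r)$ are pairwise $\simeq$-equivalent.
   Context: Let $F_2$ be the free group on $\xi,\nu$ and let $\varphi:F_2\to F_2$ be the automorphism $\varphi(\xi)=\xi\nu\xi$, $\varphi(\nu)=\xi$; $|\cdot|$ denotes word length with respect to $\{\xi,\nu\}$. Define $w_0(r)=r$ and inductively $w_n(r)=|\varphi^{w_{n-1}(r)}(\xi)|$ for $r\in\mathbb N$. $\exp^n$ is the $n$-fold composition of the exponential function. For functions $f,g$, $f\preceq g$ means there is $C>0$ with $f(x)\le C\,g(Cx)+Cx$ for all $x$, and $f\simeq g$ means $f\preceq g$ and $g\preceq f$. *)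

theory Defs
  imports Complex_Main
begin

text \<open>Free group F_2 on generators xi, nu, modelled by reduced words over
  letters (generator, inverted?).  Group elements are reduced words.\<close>

datatype gen = Xi | Nu

type_synonym letter = "gen \<times> bool"   (* (a, False) = a, (a, True) = a^-1 *)

definition inv_letter :: "letter \<Rightarrow> letter" where
  "inv_letter l = (fst l, \<not> snd l)"

fun push :: "letter \<Rightarrow> letter list \<Rightarrow> letter list" where
  "push l [] = [l]"
| "push l (m # ms) = (if m = inv_letter l then ms else l # m # ms)"

definition reduce :: "letter list \<Rightarrow> letter list" where
  "reduce w = rev (foldl (\<lambda>acc l. push l acc) [] w)"

definition inv_word :: "letter list \<Rightarrow> letter list" where
  "inv_word w = rev (map inv_letter w)"

fun phi_gen :: "gen \<Rightarrow> letter list" where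
  "phi_gen Xi = [(Xi, False), (Nu, False), (Xi, False)]"
| "phi_gen Nu = [(Xi, False)]"

definition phi_letter :: "letter \<Rightarrow> letter list" where
  "phi_letter l = (if snd l then inv_word (phi_gen (fst l)) else phi_gen (fst l))"

definition phi :: "letter list \<Rightarrow> letter list" where
  "phi w = reduce (concat (map phi_letter w))"

definition wlen :: "letter list \<Rightarrow> nat" where
  "wlen w = length (reduce w)"

definition xi :: "letter list" where
  "xi = [(Xi, False)]"

fun wn :: "nat \<Rightarrow> nat \<Rightarrow> nat" where
  "wn 0 r = r"
| "wn (Suc n) r = wlen ((phi ^^ (wn n r)) xi)"

definition preceq :: "(nat \<Rightarrow> real) \<Rightarrow> (nat \<Rightarrow> real) \<Rightarrow> bool" where
  "preceq f g \<longleftrightarrow> (\<exists>C::nat. C > 0 \<and> (\<forall>x. f x \<le> real C * g (C * x) + real C * real x))"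

definition simeq :: "(nat \<Rightarrow> real) \<Rightarrow> (nat \<Rightarrow> real) \<Rightarrow> bool" where
  "simeq f g \<longleftrightarrow> preceq f g \<and> preceq g f"

end

theory Submission
  imports Defs
begin

text \<open>The image of \<open>\<xi>\<close> under every power of \<open>\<phi>\<close> is a positive word, and \<open>\<phi>\<close> acts on
  positive words without cancellation, sending the letter counts \<open>(x, y)\<close> of \<open>\<xi>\<close> and \<open>\<nu>\<close>
  to \<open>(2x + y, x)\<close>.  Since \<open>y \<le> x\<close> along the orbit, \<open>\<ell>\<^sub>i = |\<phi>\<^sup>i(\<xi>)|\<close> satisfies
  \<open>2\<ell>\<^sub>i \<le> \<ell>\<^sub>i\<^sub>+\<^sub>1 \<le> 3\<ell>\<^sub>i\<close>.  Hence the partial sums of \<open>\<ell>\<close> are within a factor 2 of their last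
  term, which is \<open>w\<^sub>n(r)\<close>, and \<open>2\<^sup>m \<le> \<ell>\<^sub>m \<le> 3\<^sup>m\<close> lets an induction on \<open>n\<close> squeeze \<open>w\<^sub>n(r)\<close>
  between \<open>exp\<^sup>n(r)\<close> and \<open>exp\<^sup>n(C r)\<close> up to constants.  The third equivalence follows from
  the first two by transitivity of \<open>\<preceq>\<close> for monotone functions.\<close>

definition positive_word :: "letter list \<Rightarrow> bool" where
  "positive_word w \<longleftrightarrow> (\<forall>l\<in>set w. \<not> snd l)"

lemma foldl_push_positive:
  assumes "positive_word w" and "positive_word acc"
  shows "foldl (\<lambda>acc l. push l acc) acc w = rev w @ acc"
  using assms
proof (induction w arbitrary: acc)
  case Nil
  then show ?case by simp
next
  case (Cons a w)
  have "push a acc = a # acc"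
    using Cons.prems by (cases acc) (auto simp: positive_word_def inv_letter_def)
  moreover have "positive_word (a # acc)" and "positive_word w"
    using Cons.prems by (auto simp: positive_word_def)
  ultimately show ?case using Cons.IH by simp
qed

lemma reduce_positive: "positive_word w \<Longrightarrow> reduce w = w"
  by (simp add: reduce_def foldl_push_positive positive_word_def)

lemma positive_word_phi_gen: "positive_word (phi_gen g)"
  by (cases g) (auto simp: positive_word_def)

lemma positive_word_concat_phi_gen: "positive_word (concat (map (phi_gen \<circ> fst) w))"
  using positive_word_phi_gen by (fastforce simp: positive_word_def)

lemma phi_positive:
  assumes "positive_word w"
  shows "phi w = concat (map (phi_gen \<circ> fst) w)"
proof -
  have "map phi_letter w = map (phi_gen \<circ> fst) w"
    using assms by (auto simp: positive_word_def phi_letter_def)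
  then show ?thesis
    by (metis phi_def reduce_positive positive_word_concat_phi_gen)
qed

lemma positive_word_phi: "positive_word w \<Longrightarrow> positive_word (phi w)"
  by (simp add: phi_positive positive_word_concat_phi_gen)

definition count_gen :: "gen \<Rightarrow> letter list \<Rightarrow> nat" where
  "count_gen g w = length (filter (\<lambda>l. fst l = g) w)"

lemma count_gen_Cons:
  "count_gen g (l # w) = (if fst l = g then Suc (count_gen g w) else count_gen g w)"
  by (simp add: count_gen_def)

lemma length_eq_count_gen: "length w = count_gen Xi w + count_gen Nu w"
proof (induction w)
  case Nil
  then show ?case by (simp add: count_gen_def)
next
  case (Cons l w)
  then show ?case by (cases "fst l") (simp_all add: count_gen_Cons)
qed

lemma count_gen_phi_positive:
  assumes "positive_word w"
  shows "count_gen Xi (phi w) = 2 * count_gen Xi w + count_gen Nu w"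
    and "count_gen Nu (phi w) = count_gen Xi w"
proof -
  have "count_gen Xi (concat (map (phi_gen \<circ> fst) w)) = 2 * count_gen Xi w + count_gen Nu w
      \<and> count_gen Nu (concat (map (phi_gen \<circ> fst) w)) = count_gen Xi w"
  proof (induction w)
    case Nil
    then show ?case by (simp add: count_gen_def)
  next
    case (Cons l w)
    then show ?case by (cases "fst l") (auto simp: count_gen_def)
  qed
  then show "count_gen Xi (phi w) = 2 * count_gen Xi w + count_gen Nu w"
    and "count_gen Nu (phi w) = count_gen Xi w"
    by (simp_all add: phi_positive[OF assms])
qed

lemma phi_iter_xi_positive:
  "positive_word ((phi ^^ i) xi) \<and> count_gen Nu ((phi ^^ i) xi) \<le> count_gen Xi ((phi ^^ i) xi)"
proof (induction i)
  case 0
  then show ?case by (simp add: xi_def positive_word_def count_gen_def)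
next
  case (Suc i)
  then show ?case by (simp add: positive_word_phi count_gen_phi_positive)
qed

definition orbit_len :: "nat \<Rightarrow> nat" where
  "orbit_len i = wlen ((phi ^^ i) xi)"

lemma orbit_len_eq_counts:
  "orbit_len i = count_gen Xi ((phi ^^ i) xi) + count_gen Nu ((phi ^^ i) xi)"
  using phi_iter_xi_positive[of i]
  by (simp add: orbit_len_def wlen_def reduce_positive length_eq_count_gen)

lemma orbit_len_Suc_bounds:
  "2 * orbit_len i \<le> orbit_len (Suc i) \<and> orbit_len (Suc i) \<le> 3 * orbit_len i"
  using phi_iter_xi_positive[of i]
  by (simp add: orbit_len_eq_counts[of "Suc i"] orbit_len_eq_counts[of i] count_gen_phi_positive)

lemma orbit_len_bounds: "2 ^ i \<le> orbit_len i \<and> orbit_len i \<le> 3 ^ i"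
proof (induction i)
  case 0
  then show ?case by (simp add: orbit_len_def wlen_def xi_def reduce_def)
next
  case (Suc i)
  then show ?case using orbit_len_Suc_bounds[of i] by auto
qed

lemma mono_orbit_len: "mono orbit_len"
proof -
  have "orbit_len i \<le> orbit_len (Suc i)" for i
    using orbit_len_Suc_bounds[of i] by linarith
  then show ?thesis by (simp add: mono_iff_le_Suc)
qed

lemma sum_orbit_len_le: "(\<Sum>i=0..m. orbit_len i) \<le> 2 * orbit_len m"
proof (induction m)
  case 0
  then show ?case by simp
next
  case (Suc m)
  then show ?case using orbit_len_Suc_bounds[of m] by simp
qed

lemma wn_Suc_eq: "wn (Suc n) r = orbit_len (wn n r)"
  by (simp add: orbit_len_def)

lemma mono_wn: "mono (wn n)"
  by (induction n)
    (auto simp: mono_def wn_Suc_eq simp del: wn.simps(2) intro: monoD[OF mono_orbit_len])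

lemma wn_Suc_pos: "0 < wn (Suc n) r"
proof -
  have "(0::nat) < 2 ^ wn n r" by simp
  also have "\<dots> \<le> wn (Suc n) r"
    using orbit_len_bounds[of "wn n r"] by (simp add: wn_Suc_eq del: wn.simps(2))
  finally show ?thesis .
qed

lemma exp_iter_nonneg: "0 \<le> a \<Longrightarrow> 0 \<le> (exp ^^ n) (a::real)"
  by (induction n) auto

lemma mono_exp_iter: "mono (exp ^^ n :: real \<Rightarrow> real)"
  by (rule mono_pow) (simp add: monoI)

lemma mono_exp_iter_of_nat: "mono (\<lambda>r. (exp ^^ n) (real r))"
  using mono_exp_iter by (simp add: mono_def)

lemma exp_iter_add_one_ge: "0 \<le> a \<Longrightarrow> (exp ^^ n) a + 1 \<le> (exp ^^ n) (a + 1::real)"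
proof (induction n)
  case 0
  then show ?case by simp
next
  case (Suc n)
  define t where "t = (exp ^^ n) a"
  have "exp t + 1 \<le> exp t * 2"
    using one_le_exp_iff exp_iter_nonneg[OF Suc.prems] by (simp add: t_def)
  also have "\<dots> \<le> exp t * exp 1"
    using exp_ge_add_one_self[of "1::real"] by simp
  also have "\<dots> = exp (t + 1)" by (simp add: exp_add)
  also have "\<dots> \<le> exp ((exp ^^ n) (a + 1))" using Suc by (simp add: t_def)
  finally show ?case by (simp add: t_def)
qed

lemma exp_iter_Suc_double:
  assumes "0 \<le> a"
  shows "2 * (exp ^^ Suc n) a \<le> (exp ^^ Suc n) (a + 1::real)"
proof -
  define t where "t = (exp ^^ n) a"
  have "2 * exp t \<le> exp 1 * exp t"
    using exp_ge_add_one_self[of "1::real"] by simp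
  also have "\<dots> = exp (t + 1)" by (simp add: exp_add)
  also have "\<dots> \<le> exp ((exp ^^ n) (a + 1))"
    using exp_iter_add_one_ge[OF assms, of n] by (simp add: t_def)
  finally show ?thesis by (simp add: t_def)
qed

lemma three_pow_le_exp: "(3::real) ^ m \<le> exp (2 * real m)"
proof -
  have "(3::real) \<le> exp 2" using exp_ge_add_one_self[of "2::real"] by simp
  then have "(3::real) ^ m \<le> exp 2 ^ m" by (simp add: power_mono)
  then show ?thesis by (simp add: exp_of_nat_mult mult.commute)
qed

lemma exp_half_le_two_pow: "exp (real m / 2) \<le> (2::real) ^ m"
proof -
  have "exp (1/2) ^ m \<le> (2::real) ^ m" using exp_half_le2 by (simp add: power_mono)
  then show ?thesis by (simp add: exp_of_nat_mult[symmetric])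
qed

lemma wn_le_exp_iter: "real (wn (Suc n) r) \<le> (exp ^^ Suc n) (2 * real r + real n + 1)"
proof (induction n)
  case 0
  have "real (wn (Suc 0) r) \<le> 3 ^ r"
    using orbit_len_bounds[of r] by (simp add: wn_Suc_eq del: wn.simps(2))
  also have "\<dots> \<le> exp (2 * real r)" by (rule three_pow_le_exp)
  also have "\<dots> \<le> exp (2 * real r + 1)" by simp
  finally show ?case by simp
next
  case (Suc n)
  define m where "m = wn (Suc n) r"
  define a where "a = 2 * real r + real n + 1"
  have "real (wn (Suc (Suc n)) r) \<le> 3 ^ m"
    using orbit_len_bounds[of m] by (simp add: m_def wn_Suc_eq del: wn.simps(2))
  also have "\<dots> \<le> exp (2 * real m)" by (rule three_pow_le_exp)
  also have "\<dots> \<le> exp (2 * (exp ^^ Suc n) a)" using Suc by (simp add: m_def a_def)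
  also have "\<dots> \<le> exp ((exp ^^ Suc n) (a + 1))"
    using exp_iter_Suc_double[of a n] by (simp add: a_def)
  finally show ?case by (simp add: a_def add_ac)
qed

text \<open>The slack \<open>+ 6\<close> is what the induction needs: \<open>2 e\<^sup>t + 6 \<le> e\<^sup>t\<^sup>+\<^sup>3 \<le> 2\<^sup>2\<^sup>t\<^sup>+\<^sup>6\<close>.\<close>

lemma exp_iter_le_wn: "1 \<le> r \<Longrightarrow> 2 * (exp ^^ n) (real r) + 6 \<le> real (wn n (8 * r))"
proof (induction n)
  case 0
  then show ?case by simp
next
  case (Suc n)
  define m where "m = wn n (8 * r)"
  define t where "t = (exp ^^ n) (real r)"
  have "2 * exp t + 6 \<le> exp t * 8"
    using one_le_exp_iff exp_iter_nonneg[of "real r" n] by (simp add: t_def)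
  also have "\<dots> \<le> exp t * exp 3"
  proof -
    have "(2::real) ^ 3 \<le> exp 1 ^ 3"
      using exp_ge_add_one_self[of "1::real"] by (intro power_mono) auto
    then show ?thesis by (simp add: exp_of_nat_mult[symmetric])
  qed
  also have "\<dots> = exp (t + 3)" by (simp add: exp_add)
  also have "\<dots> \<le> exp (real m / 2)" using Suc by (simp add: m_def t_def)
  also have "\<dots> \<le> 2 ^ m" by (rule exp_half_le_two_pow)
  also have "\<dots> \<le> real (wn (Suc n) (8 * r))"
    using orbit_len_bounds[of m] by (simp add: m_def wn_Suc_eq del: wn.simps(2))
  finally show ?case by (simp add: t_def)
qed

lemma preceqI:
  assumes "0 < C" and "\<And>x. f x \<le> real C * g (C * x)"
  shows "preceq f g"
  unfolding preceq_def
proof (intro exI[of _ C] conjI allI)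
  show "f x \<le> real C * g (C * x) + real C * real x" for x
    using assms(2)[of x] by (simp add: add_increasing2)
qed (rule assms(1))

text \<open>The linear term in \<open>\<preceq>\<close> cannot absorb the value at \<open>0\<close>, so a positive \<open>g 0\<close> is
  needed to rescale the constant there.\<close>

lemma preceq_if_ge_one:
  assumes "mono g" and "0 < g 0" and "0 < C"
    and "\<And>x. 1 \<le> x \<Longrightarrow> f x \<le> real C * g (C * x)"
  shows "preceq f g"
proof -
  define K where "K = C + nat \<lceil>f 0 / g 0\<rceil>"
  have g_nonneg: "0 \<le> g y" for y
    using monoD[OF assms(1), of 0 y] assms(2) by simp
  have "f x \<le> real K * g (K * x)" for x
  proof (cases "x = 0")
    case True
    have "f 0 / g 0 \<le> real K"
      using real_nat_ceiling_ge[of "f 0 / g 0"] by (simp add: K_def)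
    then show ?thesis using True assms(2) by (simp add: pos_divide_le_eq mult.commute)
  next
    case False
    have "f x \<le> real C * g (C * x)" using False assms(4) by simp
    also have "\<dots> \<le> real C * g (K * x)"
      by (intro mult_left_mono monoD[OF assms(1)]) (auto simp: K_def)
    also have "\<dots> \<le> real K * g (K * x)"
      using g_nonneg by (intro mult_right_mono) (auto simp: K_def)
    finally show ?thesis .
  qed
  then show ?thesis using assms(3) by (intro preceqI[of K]) (auto simp: K_def)
qed

lemma preceq_trans:
  assumes "preceq f g" and "preceq g h" and "mono h" and "0 \<le> h 0"
  shows "preceq f h"
proof -
  obtain C :: nat where C: "0 < C" "\<And>x. f x \<le> real C * g (C * x) + real C * real x"
    using assms(1) by (auto simp: preceq_def)
  obtain D :: nat where D: "0 < D" "\<And>x. g x \<le> real D * h (D * x) + real D * real x"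
    using assms(2) by (auto simp: preceq_def)
  define K where "K = C * D * (C + 1)"
  have "f x \<le> real K * h (K * x) + real K * real x" for x
  proof -
    have h_le: "h (C * D * x) \<le> h (K * x)"
      by (intro monoD[OF assms(3)]) (simp add: K_def)
    have h_nonneg: "0 \<le> h (C * D * x)"
      using monoD[OF assms(3), of 0 "C * D * x"] assms(4) by simp
    have "f x \<le> real C * (real D * h (D * (C * x)) + real D * real (C * x)) + real C * real x"
      using C(2)[of x] D(2)[of "C * x"] C(1) by (smt (verit) mult_left_mono of_nat_0_le_iff)
    also have "\<dots> = real (C * D) * h (C * D * x) + real (C * C * D + C) * real x"
      by (simp add: algebra_simps)
    also have "\<dots> \<le> real K * h (K * x) + real K * real x"
    proof (intro add_mono mult_mono)
      have "C \<le> C * D" using D(1) by simp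
      then show "real (C * C * D + C) \<le> real K"
        unfolding of_nat_le_iff K_def by (simp add: algebra_simps)
    qed (use h_le h_nonneg in \<open>auto simp: K_def\<close>)
    finally show ?thesis .
  qed
  moreover have "0 < K" using C(1) D(1) by (simp add: K_def)
  ultimately show ?thesis by (auto simp: preceq_def)
qed

lemma simeq_trans:
  assumes "simeq f g" and "simeq g h"
    and "mono f" and "mono h" and "0 \<le> f 0" and "0 \<le> h 0"
  shows "simeq f h"
  using assms preceq_trans by (meson simeq_def)

lemma simeq_sum_orbit_len_wn:
  "simeq (\<lambda>r. real (\<Sum>i=0..wn k r. wlen ((phi ^^ i) xi))) (\<lambda>r. real (wn (Suc k) r))"
proof -
  define S where "S r = (\<Sum>i=0..wn k r. wlen ((phi ^^ i) xi))" for r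
  have S_eq: "S r = (\<Sum>i=0..wn k r. orbit_len i)" for r
    by (simp add: S_def orbit_len_def)
  have lower: "wn (Suc k) r \<le> S r" for r
    unfolding S_eq wn_Suc_eq by (rule member_le_sum) auto
  have upper: "S r \<le> 2 * wn (Suc k) (2 * r)" for r
    using sum_orbit_len_le[of "wn k r"] monoD[OF mono_wn, of r "2 * r" "Suc k"]
    by (simp add: S_eq wn_Suc_eq del: wn.simps(2))
  have "preceq (\<lambda>r. real (S r)) (\<lambda>r. real (wn (Suc k) r))"
  proof (rule preceqI[of 2])
    show "real (S r) \<le> real 2 * real (wn (Suc k) (2 * r))" for r
      using upper[of r] unfolding of_nat_mult[symmetric] of_nat_le_iff .
  qed simp
  moreover have "preceq (\<lambda>r. real (wn (Suc k) r)) (\<lambda>r. real (S r))"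
    by (rule preceqI[of 1]) (use lower in \<open>simp_all del: wn.simps(2)\<close>)
  ultimately show ?thesis by (simp add: simeq_def S_def)
qed

lemma simeq_wn_exp_iter:
  "simeq (\<lambda>r. real (wn (Suc k) r)) (\<lambda>r. (exp ^^ Suc k) (real r))"
proof -
  have mono_wn_real: "mono (\<lambda>r. real (wn (Suc k) r))"
    using mono_wn[of "Suc k"] by (simp add: mono_def del: wn.simps(2))
  have wn_le: "real (wn (Suc k) r) \<le> real (k + 3) * (exp ^^ Suc k) (real ((k + 3) * r))"
    if "1 \<le> r" for r
  proof -
    have "real (wn (Suc k) r) \<le> (exp ^^ Suc k) (2 * real r + real k + 1)"
      by (rule wn_le_exp_iter)
    also have "\<dots> \<le> (exp ^^ Suc k) (real ((k + 3) * r))"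
      using that mult_left_mono[of 1 "real r" "real k"]
      by (intro monoD[OF mono_exp_iter]) (simp add: algebra_simps)
    also have "\<dots> \<le> real (k + 3) * (exp ^^ Suc k) (real ((k + 3) * r))"
      by (simp add: exp_iter_nonneg)
    finally show ?thesis .
  qed
  have exp_iter_le: "(exp ^^ Suc k) (real r) \<le> real 8 * real (wn (Suc k) (8 * r))"
    if "1 \<le> r" for r
    using exp_iter_le_wn[OF that, of "Suc k"] exp_iter_nonneg[of "real r" "Suc k"] by simp
  have "preceq (\<lambda>r. real (wn (Suc k) r)) (\<lambda>r. (exp ^^ Suc k) (real r))"
    by (rule preceq_if_ge_one[where C = "k + 3", OF mono_exp_iter_of_nat _ _ wn_le]) simp_all
  moreover have "preceq (\<lambda>r. (exp ^^ Suc k) (real r)) (\<lambda>r. real (wn (Suc k) r))"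
    by (rule preceq_if_ge_one[where C = 8, OF mono_wn_real _ _ exp_iter_le])
      (simp_all add: wn_Suc_pos del: wn.simps(2))
  ultimately show ?thesis by (simp add: simeq_def)
qed

theorem lemma5p1:
  fixes n :: nat
  assumes "n \<ge> 1"
  shows "simeq (\<lambda>r. real (\<Sum>i=0..wn (n - 1) r. wlen ((phi ^^ i) xi))) (\<lambda>r. real (wn n r))
       \<and> simeq (\<lambda>r. real (wn n r)) (\<lambda>r. (exp ^^ n) (real r))
       \<and> simeq (\<lambda>r. real (\<Sum>i=0..wn (n - 1) r. wlen ((phi ^^ i) xi))) (\<lambda>r. (exp ^^ n) (real r))"
proof -
  obtain k where n: "n = Suc k" using assms by (cases n) auto
  have mono_sum: "mono (\<lambda>r. real (\<Sum>i=0..wn k r. wlen ((phi ^^ i) xi)))"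
  proof (rule monoI)
    fix r s :: nat
    assume "r \<le> s"
    then have "wn k r \<le> wn k s" by (rule monoD[OF mono_wn])
    then show "real (\<Sum>i=0..wn k r. wlen ((phi ^^ i) xi)) \<le> real (\<Sum>i=0..wn k s. wlen ((phi ^^ i) xi))"
      unfolding of_nat_le_iff by (intro sum_mono2) auto
  qed
  have "simeq (\<lambda>r. real (\<Sum>i=0..wn k r. wlen ((phi ^^ i) xi))) (\<lambda>r. (exp ^^ Suc k) (real r))"
    using simeq_trans[OF simeq_sum_orbit_len_wn simeq_wn_exp_iter mono_sum mono_exp_iter_of_nat]
    by (simp add: exp_iter_nonneg sum_nonneg)
  then show ?thesis
    using simeq_sum_orbit_len_wn simeq_wn_exp_iter by (simp add: n)
qed

end
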